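(* Let $\mathbb{F}$ be a field of odd characteristic $p>2$ that is algebraic over $\mathbb{F}_p$. Then \[ SD(\mathbb{F}) = \begin{cases} \operatorname{Aut}(\mathbb{F}) & \text{if } \mathbb{F} \neq \mathbb{F}_5, \\ \{ \mathrm{id}, \ w \mapsto w^3 \} \cong \mathbb{Z}/2\mathbb{Z} & \text{if } \mathbb{F} = \mathbb{F}_5. \end{cases} \]
   Context: For fields $\mathbb{F},\widetilde{\mathbb{F}}$, a map $f:\mathbb{F}\to\widetilde{\mathbb{F}}$ is called an SD-map if for all $x\neq y$ in $\mathbb{F}$ one has $f(x)\neq f(y)$ and \[ f\left(\frac{x+y}{x-y}\right)=\frac{f(x)+f(y)}{f(x)-f(y)}. \] For a field $\mathbb{F}$, $SD(\mathbb{F})$ denotes the set of surjective SD-maps $f:\mathbb{F}\to\mathbb{F}$ (a group under composition). $\operatorname{Aut}(\mathbb{F})$ is the group of field automorphisms of $\mathbb{F}$, and $\mathbb{F}_q$ denotes the finite field with $q$ elements. *)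

theory Defs
  imports "HOL-Computational_Algebra.Polynomial"
begin

definition sd_map :: "('a::field \<Rightarrow> 'b::field) \<Rightarrow> bool" where
  "sd_map f \<longleftrightarrow> (\<forall>x y. x \<noteq> y \<longrightarrow>
       f x \<noteq> f y \<and> f ((x + y) / (x - y)) = (f x + f y) / (f x - f y))"

definition SD :: "('a::field \<Rightarrow> 'a) set" where
  "SD = {f. surj f \<and> sd_map f}"

definition field_aut :: "('a::field \<Rightarrow> 'a) set" where
  "field_aut = {f. bij f \<and> (\<forall>x y. f (x + y) = f x + f y) \<and>
                   (\<forall>x y. f (x * y) = f x * f y) \<and> f 1 = 1}"

text \<open>x is algebraic over the prime field: it is a root of a nonzero polynomial
  whose coefficients lie in the prime subfield (the image of the integers).\<close>
definition algebraic_over_prime_field :: "'a::field \<Rightarrow> bool" where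
  "algebraic_over_prime_field x \<longleftrightarrow>
     (\<exists>q :: int poly. map_poly of_int q \<noteq> (0 :: 'a poly) \<and> poly (map_poly of_int q) x = 0)"

end

theory Submission
  imports Defs "HOL-Number_Theory.Residues"
begin

text \<open>An SD-map \<open>f\<close> of a field with \<open>2 \<noteq> 0\<close> fixes \<open>0\<close> and \<open>1\<close> and is multiplicative,
  so the SD-equation becomes \<open>f (x + y) (f x - f y) = f (x - y) (f x + f y)\<close>. Eliminating
  between a few instances of this identity gives \<open>2 f (r + 1) = f 2 (f r + 1)\<close> whenever
  \<open>r \<noteq> 0\<close> and \<open>r\<^sup>2 \<noteq> -1\<close>. At \<open>r = 2\<close> this forces \<open>f 2 = 2\<close>, which makes \<open>f\<close> additive,
  unless \<open>5 = 0\<close> and \<open>f 2 = -2\<close>. In that case the same relation reads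
  \<open>f (s + 1) = -(f s + 1)\<close>, so \<open>f (r + 2) = f r\<close> for every \<open>r\<close> outside \<open>{0, \<plusminus>1, \<plusminus>2}\<close>,
  contradicting injectivity; hence the field is \<open>\<bbbF>\<^sub>5\<close>. There \<open>w\<^sup>3 = 1 / w\<close>,
  and inversion is an SD-map because distinct nonzero squares in \<open>\<bbbF>\<^sub>5\<close> are \<open>1\<close> and \<open>-1\<close>.\<close>

locale char_not_2_sd_map =
  fixes f :: "'a::field \<Rightarrow> 'a"
  assumes sd_map: "sd_map f" and two_nonzero: "(2::'a) \<noteq> 0"
begin

lemma eq_iff [simp]: "f x = f y \<longleftrightarrow> x = y"
  using sd_map unfolding sd_map_def by blast

lemma sd_eq: "x \<noteq> y \<Longrightarrow> f ((x + y) / (x - y)) = (f x + f y) / (f x - f y)"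
  using sd_map unfolding sd_map_def by blast

lemma one_neq_minus_one: "(1::'a) \<noteq> -1"
  using two_nonzero by (metis add_eq_0_iff one_add_one)

lemma four_nonzero: "(4::'a) \<noteq> 0"
proof -
  have "(4::'a) = 2 * 2"
    by simp
  then show ?thesis
    using two_nonzero by (metis mult_eq_0_iff)
qed

lemma map_0_and_1: "f 0 = 0 \<and> f 1 = 1"
proof -
  have key: "f 1 * (f x - f 0) = f x + f 0" if "x \<noteq> 0" for x
    using sd_eq[of x 0] that by (simp add: field_simps)
  have "f 1 * (f 1 - f (-1)) = f 1 - f (-1)"
    using key[of 1] key[of "-1"] by (simp add: algebra_simps)
  then have one: "f 1 = 1"
    using one_neq_minus_one by simp
  then have "2 * f 0 = 0"
    using key[of 1] by (simp add: algebra_simps)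
  with one two_nonzero show ?thesis by simp
qed

lemma map_0 [simp]: "f 0 = 0"
  using map_0_and_1 by simp

lemma map_1 [simp]: "f 1 = 1"
  using map_0_and_1 by simp

lemma map_eq_0_iff [simp]: "f x = 0 \<longleftrightarrow> x = 0"
  using eq_iff[of x 0] by simp

text \<open>The SD-equations at \<open>(x, r x)\<close> and at \<open>(1, r)\<close> have the same left-hand side,
  and \<open>t \<mapsto> (1 + t) / (1 - t)\<close> is injective.\<close>
lemma map_mult: "f (r * x) = f r * f x"
proof (cases "x = 0 \<or> r = 1")
  case False
  then have "x \<noteq> r * x" and "1 \<noteq> r" by auto
  have "(x + r * x) / (x - r * x) = (1 + r) / (1 - r)"
    using False by (simp add: field_simps)
  then have "(f x + f (r * x)) / (f x - f (r * x)) = (1 + f r) / (1 - f r)"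
    using sd_eq[OF \<open>x \<noteq> r * x\<close>] sd_eq[OF \<open>1 \<noteq> r\<close>] by simp
  then have "(f x + f (r * x)) * (1 - f r) = (1 + f r) * (f x - f (r * x))"
    using \<open>x \<noteq> r * x\<close> \<open>1 \<noteq> r\<close> eq_iff[of x "r * x"] eq_iff[of 1 r]
    by (simp add: field_simps)
  then have "2 * f (r * x) = 2 * (f r * f x)"
    by (simp add: algebra_simps)
  with two_nonzero show ?thesis by simp
qed auto

lemma map_minus_1 [simp]: "f (-1) = -1"
proof -
  have "f (-1) * f (-1) = 1 * 1"
    using map_mult[of "-1" "-1"] by simp
  then show ?thesis
    using one_neq_minus_one eq_iff[of "-1" 1] square_eq_iff[of "f (-1)" 1] by auto
qed

lemma map_minus [simp]: "f (- x) = - f x"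
  using map_mult[of "-1" x] by simp

lemma map_inverse [simp]: "f (inverse x) = inverse (f x)"
proof (cases "x = 0")
  case False
  then have "f x * f (inverse x) = 1"
    using map_mult[of x "inverse x"] by simp
  then show ?thesis
    by (simp add: inverse_unique)
qed simp

lemma map_divide [simp]: "f (x / y) = f x / f y"
  by (simp add: divide_inverse map_mult)

lemma map_power2: "f (x ^ 2) = f x ^ 2"
  by (simp add: power2_eq_square map_mult)

lemma map_add_mult_diff: "f (x + y) * (f x - f y) = f (x - y) * (f x + f y)"
proof (cases "x = y")
  case False
  then show ?thesis
    using sd_eq[OF False] eq_iff[of x y] by (simp add: field_simps)
qed simp

text \<open>Eliminate \<open>f (r - 1)\<close>, \<open>f (r + 2)\<close> and \<open>f (r - 2)\<close> from the instances
  \<open>(r, 1)\<close>, \<open>(r + 1, 1)\<close>, \<open>(r - 1, 1)\<close> and \<open>(r, 2)\<close> of \<open>map_add_mult_diff\<close>.\<close>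
lemma map_succ_quadratic:
  "f 2 * (f r - 1) * f (r + 1) ^ 2 - 2 * f r ^ 2 * f (r + 1) + f 2 * (f r + 1) = 0"
proof (cases "r = 0")
  case False
  define u v w A B c
    where "u = f r" "v = f (r + 1)" "w = f (r - 1)" "A = f (r + 2)" "B = f (r - 2)" "c = f 2"
  have E1: "v * (u - 1) = w * (u + 1)"
    using map_add_mult_diff[of r 1] by (simp add: u_v_w_A_B_c_def)
  have E2: "A * (v - 1) = u * (v + 1)"
    using map_add_mult_diff[of "r + 1" 1] by (simp add: u_v_w_A_B_c_def add.assoc one_add_one)
  have E3: "u * (w - 1) = B * (w + 1)"
    using map_add_mult_diff[of "r - 1" 1] by (simp add: u_v_w_A_B_c_def diff_diff_eq one_add_one)
  have E4: "A * (u - c) = B * (u + c)"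
    using map_add_mult_diff[of r 2] by (simp add: u_v_w_A_B_c_def)
  have "u * ((v + 1) * (u - c) * (w + 1)) = (A * (v - 1)) * (u - c) * (w + 1)"
    using E2 by (simp add: ac_simps)
  also have "\<dots> = (A * (u - c)) * (v - 1) * (w + 1)"
    by (simp add: ac_simps)
  also have "\<dots> = (B * (w + 1)) * (u + c) * (v - 1)"
    using E4 by (simp add: ac_simps)
  also have "\<dots> = u * ((w - 1) * (u + c) * (v - 1))"
    using E3 by (simp add: ac_simps)
  finally have "u * ((v + 1) * (u - c) * (w + 1)) = u * ((w - 1) * (u + c) * (v - 1))" .
  then have E5: "(v + 1) * (u - c) * (w + 1) = (w - 1) * (u + c) * (v - 1)"
    using False by (simp add: u_v_w_A_B_c_def)
  have "-2 * (c * (u - 1) * v ^ 2 - 2 * u ^ 2 * v + c * (u + 1))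
      = (u + 1) * ((v + 1) * (u - c) * (w + 1) - (w - 1) * (u + c) * (v - 1))
        - ((v + 1) * (u - c) - (v - 1) * (u + c)) * (w * (u + 1) - v * (u - 1))"
    by (simp add: algebra_simps power2_eq_square)
  also have "\<dots> = 0"
    using E1 E5 by simp
  finally have "c * (u - 1) * v ^ 2 - 2 * u ^ 2 * v + c * (u + 1) = 0"
    using two_nonzero by (metis mult_eq_0_iff neg_equal_0_iff_equal)
  then show ?thesis
    by (simp add: u_v_w_A_B_c_def)
qed simp

text \<open>Combine \<open>map_succ_quadratic\<close> at \<open>r\<close> and at \<open>1 / r\<close>: after clearing
  denominators their sum factors as \<open>(f r ^ 2 + 1) (f 2 (f r + 1) - 2 f (r + 1))\<close>.\<close>
lemma map_succ_eq:
  assumes "r \<noteq> 0" and "r ^ 2 \<noteq> -1"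
  shows "2 * f (r + 1) = f 2 * (f r + 1)"
proof -
  define u v c where "u = f r" "v = f (r + 1)" "c = f 2"
  have "u \<noteq> 0"
    using assms(1) by (simp add: u_v_c_def)
  have q1: "c * (u - 1) * v ^ 2 - 2 * u ^ 2 * v + c * (u + 1) = 0"
    using map_succ_quadratic[of r] by (simp add: u_v_c_def)
  have "inverse r + 1 = (r + 1) / r"
    using assms(1) by (simp add: field_simps)
  then have "c * (inverse u - 1) * (v / u) ^ 2 - 2 * inverse u ^ 2 * (v / u) + c * (inverse u + 1) = 0"
    using map_succ_quadratic[of "inverse r"] by (simp add: u_v_c_def)
  moreover have "u ^ 3 * (c * (inverse u - 1) * (v / u) ^ 2 - 2 * inverse u ^ 2 * (v / u)
      + c * (inverse u + 1)) = c * (1 - u) * v ^ 2 - 2 * v + c * u ^ 2 * (1 + u)"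
    using \<open>u \<noteq> 0\<close> by (simp add: field_simps power2_eq_square power3_eq_cube)
  ultimately have q2: "c * (1 - u) * v ^ 2 - 2 * v + c * u ^ 2 * (1 + u) = 0"
    by simp
  have "(u ^ 2 + 1) * (c * (u + 1) - 2 * v)
      = (c * (u - 1) * v ^ 2 - 2 * u ^ 2 * v + c * (u + 1)) + (c * (1 - u) * v ^ 2 - 2 * v + c * u ^ 2 * (1 + u))"
    by (simp add: algebra_simps power2_eq_square)
  then have "(u ^ 2 + 1) * (c * (u + 1) - 2 * v) = 0"
    using q1 q2 by simp
  moreover have "u ^ 2 \<noteq> -1"
    using assms(2) eq_iff[of "r ^ 2" "-1"] by (simp add: u_v_c_def map_power2)
  then have "u ^ 2 + 1 \<noteq> 0"
    by (simp add: eq_neg_iff_add_eq_0)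
  ultimately show ?thesis
    by (simp add: u_v_c_def)
qed

text \<open>Here \<open>map_succ_eq\<close> is unavailable; instead \<open>(r + 1)\<^sup>2 = 2 r\<close> gives
  \<open>f (r + 1) = \<plusminus>(f r + 1)\<close>, and \<open>map_succ_quadratic\<close> excludes the minus sign.\<close>
lemma map_succ_if_square_eq_minus_1:
  assumes "f 2 = 2" and "r ^ 2 = -1"
  shows "f (r + 1) = f r + 1"
proof -
  define u v where "u = f r" "v = f (r + 1)"
  have u2: "u ^ 2 = -1"
    using assms(2) map_power2[of r] by (simp add: u_v_def)
  have "r \<noteq> -1"
    using assms(2) one_neq_minus_one by auto
  then have "u + 1 \<noteq> 0"
    using eq_iff[of r "-1"] by (simp add: u_v_def eq_neg_iff_add_eq_0)
  have "(r + 1) ^ 2 = 2 * r"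
    using assms(2) by (simp add: algebra_simps power2_eq_square)
  then have "v ^ 2 = 2 * u"
    using map_power2[of "r + 1"] map_mult[of 2 r] assms(1) by (simp add: u_v_def)
  then have "v ^ 2 = (u + 1) ^ 2"
    using u2 by (simp add: algebra_simps power2_eq_square)
  then have "v = u + 1 \<or> v = - (u + 1)"
    by (simp add: power2_eq_square square_eq_iff)
  moreover have "v \<noteq> - (u + 1)"
  proof
    assume v: "v = - (u + 1)"
    have "0 = 2 * (u - 1) * v ^ 2 - 2 * u ^ 2 * v + 2 * (u + 1)"
      using map_succ_quadratic[of r, unfolded assms(1)] by (simp only: u_v_def)
    also have "\<dots> = 4 * u ^ 2 * (u + 1)"
      unfolding v by (simp add: algebra_simps power2_eq_square)
    also have "\<dots> = -4 * (u + 1)"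
      using u2 by simp
    finally show False
      using \<open>u + 1 \<noteq> 0\<close> four_nonzero by (metis mult_eq_0_iff neg_0_equal_iff_equal)
  qed
  ultimately show ?thesis
    by (simp add: u_v_def)
qed

lemma map_succ_if_map_2:
  assumes "f 2 = 2"
  shows "f (r + 1) = f r + 1"
proof -
  consider "r = 0" | "r ^ 2 = -1" | "r \<noteq> 0" "r ^ 2 \<noteq> -1"
    by blast
  then show ?thesis
  proof cases
    case 2
    with assms show ?thesis
      by (rule map_succ_if_square_eq_minus_1)
  next
    case 3
    then have "2 * (f (r + 1) - (f r + 1)) = 0"
      using map_succ_eq[of r] assms by (simp add: algebra_simps)
    then show ?thesis
      using two_nonzero by (metis mult_eq_0_iff right_minus_eq)
  qed simp
qed

lemma map_add_if_map_2:
  assumes "f 2 = 2"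
  shows "f (x + y) = f x + f y"
proof (cases "y = 0")
  case False
  have "x + y = y * (x / y + 1)"
    using False by (simp add: field_simps)
  then have "f (x + y) = f y * (f x / f y + 1)"
    using map_succ_if_map_2[OF assms] by (simp add: map_mult)
  also have "\<dots> = f x + f y"
    using False by (simp add: field_simps)
  finally show ?thesis .
qed simp

lemma map_2_if_5_eq_0:
  assumes "(5::'a) = 0"
  shows "f 2 = 2 \<or> f 2 = -2"
proof -
  have "(4::'a) + 1 = 5"
    by simp
  with assms have "(2::'a) ^ 2 = -1"
    by (simp add: eq_neg_iff_add_eq_0)
  then have "f 2 ^ 2 = f (-1)"
    using map_power2[of 2] by (simp only:)
  then have "(f 2 - 2) * (f 2 + 2) = - 5"
    by (simp add: algebra_simps power2_eq_square)
  with assms show ?thesis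
    by (simp add: eq_neg_iff_add_eq_0)
qed

text \<open>\<open>map_succ_eq\<close> at \<open>r = 2\<close> expresses \<open>f 3\<close> through \<open>c = f 2\<close>; substituting this
  into \<open>map_succ_quadratic\<close> at \<open>r = 2\<close> leaves \<open>c (c + 1)\<^sup>2 (c - 1) (c - 2) (c + 2) = 0\<close>.\<close>
lemma map_2_if_5_neq_0:
  assumes "(5::'a) \<noteq> 0"
  shows "f 2 = 2"
proof (cases "(3::'a) = 0")
  case True
  have "(2::'a) + 1 = 3"
    by simp
  with True have "(2::'a) = -1"
    by (simp add: eq_neg_iff_add_eq_0)
  then show ?thesis
    by (metis map_minus_1)
next
  case False
  define c where "c = f 2"
  have "(2::'a) ^ 2 + 1 = 5" and "(2::'a) + 1 = 3"
    by simp_all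
  with assms False have "(2::'a) ^ 2 \<noteq> -1" and "(2::'a) \<noteq> -1"
    by (simp_all add: eq_neg_iff_add_eq_0)
  have K: "2 * f 3 = c * (c + 1)"
    using map_succ_eq[of 2] two_nonzero \<open>(2::'a) ^ 2 \<noteq> -1\<close> by (simp add: c_def)
  have Q: "c * (c - 1) * f 3 ^ 2 - 2 * c ^ 2 * f 3 + c * (c + 1) = 0"
    using map_succ_quadratic[of 2] by (simp add: c_def)
  have "c * (c + 1) * (c - 1) * (c + 1) * (c - 2) * (c + 2)
      = c * (c - 1) * (2 * f 3) ^ 2 - 4 * c ^ 2 * (2 * f 3) + 4 * c * (c + 1)"
    unfolding K by (simp add: algebra_simps power2_eq_square)
  also have "\<dots> = 4 * (c * (c - 1) * f 3 ^ 2 - 2 * c ^ 2 * f 3 + c * (c + 1))"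
    by (simp add: algebra_simps power2_eq_square)
  finally have "c * (c + 1) * (c - 1) * (c + 1) * (c - 2) * (c + 2) = 0"
    using Q by simp
  moreover have "(2::'a) \<noteq> 1"
    using one_add_one[where 'a='a] by (metis add_cancel_right_right zero_neq_one)
  with \<open>(2::'a) \<noteq> -1\<close> have "c \<noteq> 0" and "c + 1 \<noteq> 0" and "c - 1 \<noteq> 0"
    using two_nonzero eq_iff[of 2 "-1"] eq_iff[of 2 1] by (auto simp: c_def eq_neg_iff_add_eq_0)
  moreover have "c + 2 \<noteq> 0"
  proof
    assume "c + 2 = 0"
    then have "c = -2"
      by (simp add: eq_neg_iff_add_eq_0)
    then have "2 * f 3 = 2 * f 1"
      using K by simp
    then have "(3::'a) = 1"
      using two_nonzero by (simp del: map_1)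
    moreover have "(3::'a) - 1 = 2"
      by simp
    ultimately show False
      using two_nonzero by simp
  qed
  ultimately have "c = 2"
    by simp
  then show ?thesis
    by (simp add: c_def)
qed

lemma map_2_cases: "f 2 = 2 \<or> (f 2 = -2 \<and> (5::'a) = 0)"
  using map_2_if_5_eq_0 map_2_if_5_neq_0 by blast

lemma UNIV_eq_if_map_2_eq_neg:
  assumes "f 2 = -2" and five: "(5::'a) = 0"
  shows "UNIV = {0, 1, -1, 2, -2 :: 'a}"
proof -
  have step: "f (s + 1) = - (f s + 1)" if "s \<notin> {0, -1, 2, -2}" for s
  proof -
    have "s ^ 2 + 1 = (s - 2) * (s + 2) + 5"
      by (simp add: algebra_simps power2_eq_square)
    with five that have "s ^ 2 \<noteq> -1"
      by (auto simp: eq_neg_iff_add_eq_0)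
    then have "2 * (f (s + 1) + (f s + 1)) = 0"
      using map_succ_eq[of s] that assms(1) by (simp add: algebra_simps)
    then show ?thesis
      using two_nonzero by (metis mult_eq_0_iff eq_neg_iff_add_eq_0)
  qed
  have "r \<in> {0, 1, -1, 2, -2}" for r :: 'a
  proof (rule ccontr)
    assume r: "r \<notin> {0, 1, -1, 2, -2}"
    have "r + 3 \<noteq> 0"
    proof
      assume "r + 3 = 0"
      then have "r = 2 - 5"
        by (simp add: eq_neg_iff_add_eq_0)
      with r show False
        unfolding five by simp
    qed
    with r have "r + 1 \<notin> {0, -1, 2, -2}"
      by (auto simp: algebra_simps eq_neg_iff_add_eq_0)
    then have "f (r + 1 + 1) = f r"
      using step[of r] step[of "r + 1"] r by simp
    then show False
      using two_nonzero by simp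
  qed
  then show ?thesis
    by blast
qed

lemma field_aut_if_map_2:
  assumes "surj f" and "f 2 = 2"
  shows "f \<in> field_aut"
proof -
  have "bij f"
    using assms(1) by (simp add: bij_def inj_def)
  then show ?thesis
    unfolding field_aut_def using map_add_if_map_2[OF assms(2)] map_mult by simp
qed

lemma eq_id_or_cube_if_UNIV_eq:
  assumes five: "(5::'a) = 0" and UNIV: "UNIV = {0, 1, -1, 2, -2 :: 'a}"
  shows "f = id \<or> f = (\<lambda>w. w ^ 3)"
proof -
  have "(8::'a) + 2 = 2 * 5"
    by simp
  then have eight: "(8::'a) = -2"
    using five by (simp add: eq_neg_iff_add_eq_0)
  have x: "x \<in> {0, 1, -1, 2, -2}" for x :: 'a
    using UNIV by blast
  from map_2_cases show ?thesis
  proof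
    assume "f 2 = 2"
    then have "f x = x" for x
      using x[of x] by auto
    then show ?thesis
      by auto
  next
    assume "f 2 = -2 \<and> (5::'a) = 0"
    then have "f x = x ^ 3" for x
      using x[of x] eight by auto
    then show ?thesis
      by auto
  qed
qed

end

lemma field_aut_subset_SD: "field_aut \<subseteq> (SD :: ('a::field \<Rightarrow> 'a) set)"
proof
  fix f :: "'a \<Rightarrow> 'a"
  assume "f \<in> field_aut"
  then have "bij f" and add: "\<And>x y. f (x + y) = f x + f y"
    and mult: "\<And>x y. f (x * y) = f x * f y" and "f 1 = 1"
    by (auto simp: field_aut_def)
  have diff: "f (x - y) = f x - f y" for x y
    using add[of "x - y" y] by simp
  have inverse: "f (inverse x) = inverse (f x)" for x
  proof (cases "x = 0")
    case True
    then show ?thesis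
      using diff[of 0 0] by simp
  next
    case False
    then have "f x * f (inverse x) = 1"
      using mult[of x "inverse x"] \<open>f 1 = 1\<close> by simp
    then show ?thesis
      by (simp add: inverse_unique)
  qed
  have "sd_map f"
    using \<open>bij f\<close> unfolding sd_map_def bij_def inj_def
    by (auto simp: divide_inverse add diff mult inverse)
  with \<open>bij f\<close> show "f \<in> SD"
    by (simp add: SD_def bij_is_surj)
qed

lemma sd_map_inverseI:
  assumes "\<And>x y :: 'a::field. x \<noteq> 0 \<Longrightarrow> y \<noteq> 0 \<Longrightarrow> x ^ 2 \<noteq> y ^ 2 \<Longrightarrow> x ^ 2 + y ^ 2 = 0"
  shows "sd_map (inverse :: 'a \<Rightarrow> 'a)"
  unfolding sd_map_def
proof (intro allI impI conjI)
  fix x y :: 'a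
  assume "x \<noteq> y"
  then show "inverse x \<noteq> inverse y"
    by simp
  show "inverse ((x + y) / (x - y)) = (inverse x + inverse y) / (inverse x - inverse y)"
  proof (cases "x = 0 \<or> y = 0 \<or> x + y = 0")
    case True
    with \<open>x \<noteq> y\<close> show ?thesis
      by (auto simp: eq_neg_iff_add_eq_0[symmetric])
  next
    case False
    have "x ^ 2 - y ^ 2 = (x - y) * (x + y)"
      by (simp add: algebra_simps power2_eq_square)
    also have "\<dots> \<noteq> 0"
      using False \<open>x \<noteq> y\<close> by simp
    finally have "x ^ 2 \<noteq> y ^ 2"
      by simp
    with False assms have "x ^ 2 + y ^ 2 = 0"
      by blast
    then have "(x - y) * (y - x) = (x + y) * (x + y)"
      by (simp add: algebra_simps power2_eq_square)
    with False \<open>x \<noteq> y\<close> have "(x - y) / (x + y) = (x + y) / (y - x)"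
      by (simp add: frac_eq_eq)
    moreover have "(inverse x + inverse y) / (inverse x - inverse y) = (x + y) / (y - x)"
      using False \<open>x \<noteq> y\<close> by (simp add: field_simps)
    ultimately show ?thesis
      by simp
  qed
qed

lemma CHAR_eq_5_iff: "CHAR('a::ring_1) = 5 \<longleftrightarrow> (5::'a) = 0"
proof
  assume "(5::'a) = 0"
  then have "CHAR('a) dvd 5"
    using of_nat_eq_0_iff_char_dvd[of 5, where 'a='a] by simp
  moreover have "\<forall>m. m dvd 5 \<longrightarrow> m = 1 \<or> m = (5::nat)"
    using prime_nat_iff[of 5] by simp
  ultimately show "CHAR('a) = 5"
    using CHAR_not_1[where 'a='a] by auto
qed (metis of_nat_CHAR of_nat_numeral)

lemma card_F5_elements:
  assumes "CHAR('a::ring_1) = 5"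
  shows "card {0, 1, -1, 2, -2 :: 'a} = 5"
proof -
  have "inj_on (of_int :: int \<Rightarrow> 'a) {-2..2}"
    by (rule inj_onI) (auto simp: of_int_eq_iff_cong_CHAR assms cong_def mod_eq_dvd_iff dvd_def, presburger)
  moreover have "{-2..2::int} = {-2, -1, 0, 1, 2}"
    by auto
  then have "{0, 1, -1, 2, -2 :: 'a} = of_int ` {-2..2}"
    by auto
  ultimately show ?thesis
    by (simp add: card_image)
qed

lemma finite_card_UNIV_eq_5_iff:
  "finite (UNIV :: 'a::field set) \<and> card (UNIV :: 'a set) = 5 \<longleftrightarrow>
     (5::'a) = 0 \<and> UNIV = {0, 1, -1, 2, -2 :: 'a}"
proof
  assume UNIV: "finite (UNIV :: 'a set) \<and> card (UNIV :: 'a set) = 5"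
  then have "(5::'a) = 0"
    using CHAR_dvd_CARD[where 'a='a] of_nat_eq_0_iff_char_dvd[of 5, where 'a='a] by simp
  with UNIV show "(5::'a) = 0 \<and> UNIV = {0, 1, -1, 2, -2 :: 'a}"
    using card_F5_elements[where 'a='a] CHAR_eq_5_iff[where 'a='a]
    by (metis card_subset_eq subset_UNIV)
next
  assume F5: "(5::'a) = 0 \<and> UNIV = {0, 1, -1, 2, -2 :: 'a}"
  have "finite {0, 1, -1, 2, -2 :: 'a}"
    by simp
  with F5 show "finite (UNIV :: 'a set) \<and> card (UNIV :: 'a set) = 5"
    using card_F5_elements[where 'a='a] CHAR_eq_5_iff[where 'a='a] by simp
qed

lemma SD_eq_field_aut:
  assumes two: "(2::'a::field) \<noteq> 0"
    and not_F5: "\<not> (finite (UNIV :: 'a set) \<and> card (UNIV :: 'a set) = 5)"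
  shows "(SD :: ('a \<Rightarrow> 'a) set) = field_aut"
proof
  show "SD \<subseteq> (field_aut :: ('a \<Rightarrow> 'a) set)"
  proof
    fix f :: "'a \<Rightarrow> 'a"
    assume "f \<in> SD"
    then have "surj f" and "sd_map f"
      by (auto simp: SD_def)
    then interpret char_not_2_sd_map f
      using two by unfold_locales
    from map_2_cases show "f \<in> field_aut"
    proof
      assume "f 2 = 2"
      with \<open>surj f\<close> show ?thesis
        by (rule field_aut_if_map_2)
    next
      assume "f 2 = -2 \<and> (5::'a) = 0"
      then show ?thesis
        using UNIV_eq_if_map_2_eq_neg not_F5 finite_card_UNIV_eq_5_iff by blast
    qed
  qed
qed (rule field_aut_subset_SD)

lemma F5_square_cases:
  fixes x :: "'a::field"
  assumes "(5::'a) = 0" and "UNIV = {0, 1, -1, 2, -2 :: 'a}" and "x \<noteq> 0"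
  shows "x ^ 2 = 1 \<or> x ^ 2 = -1"
proof -
  have "(2::'a) ^ 2 = -1"
    using assms(1) by (simp add: eq_neg_iff_add_eq_0)
  moreover from assms(2,3) have "x \<in> {1, -1, 2, -2}"
    by blast
  then have "x ^ 2 = 1 \<or> x ^ 2 = 2 ^ 2"
    by auto
  ultimately show ?thesis
    by metis
qed

lemma F5_cube_eq_inverse:
  assumes "(5::'a::field) = 0" and "UNIV = {0, 1, -1, 2, -2 :: 'a}"
  shows "(\<lambda>w::'a. w ^ 3) = inverse"
proof
  fix x :: 'a
  show "x ^ 3 = inverse x"
  proof (cases "x = 0")
    case False
    then have "x * x ^ 3 = 1"
      using F5_square_cases[OF assms False] by (auto simp: power2_eq_square power3_eq_cube)
    then show ?thesis
      by (simp add: inverse_unique)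
  qed simp
qed

lemma SD_F5:
  assumes five: "(5::'a::field) = 0" and UNIV: "UNIV = {0, 1, -1, 2, -2 :: 'a}"
  shows "(SD :: ('a \<Rightarrow> 'a) set) = {id, \<lambda>w. w ^ 3}"
proof -
  have "CHAR('a) = 5"
    using five CHAR_eq_5_iff by blast
  then have two: "(2::'a) \<noteq> 0"
    using of_nat_eq_0_iff_char_dvd[of 2, where 'a='a] by simp
  have "sd_map (inverse :: 'a \<Rightarrow> 'a)"
  proof (rule sd_map_inverseI)
    fix x y :: 'a
    assume "x \<noteq> 0" "y \<noteq> 0" "x ^ 2 \<noteq> y ^ 2"
    then show "x ^ 2 + y ^ 2 = 0"
      using F5_square_cases[OF five UNIV, of x] F5_square_cases[OF five UNIV, of y] by auto
  qed
  moreover have "surj (inverse :: 'a \<Rightarrow> 'a)"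
    by (metis inverse_inverse_eq surjI)
  ultimately have "(\<lambda>w::'a. w ^ 3) \<in> SD"
    by (simp add: SD_def F5_cube_eq_inverse[OF five UNIV])
  moreover have "SD \<subseteq> {id, \<lambda>w::'a. w ^ 3}"
  proof
    fix f :: "'a \<Rightarrow> 'a"
    assume "f \<in> SD"
    then interpret char_not_2_sd_map f
      using two by unfold_locales (simp add: SD_def)
    show "f \<in> {id, \<lambda>w. w ^ 3}"
      using eq_id_or_cube_if_UNIV_eq[OF five UNIV] by blast
  qed
  ultimately show ?thesis
    by (auto simp: SD_def sd_map_def)
qed

theorem theorem1p5:
  fixes p :: nat
  assumes "prime p" and "p > 2" and "CHAR('a::field) = p"
    and "\<forall>x::'a. algebraic_over_prime_field x"
  shows "(if finite (UNIV :: 'a set) \<and> card (UNIV :: 'a set) = 5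
          then (SD :: ('a \<Rightarrow> 'a) set) = {id, \<lambda>w. w ^ 3}
          else (SD :: ('a \<Rightarrow> 'a) set) = field_aut)"
proof -
  have "(2::'a) \<noteq> 0"
    using assms(2,3) of_nat_eq_0_iff_char_dvd[of 2, where 'a='a] by (auto dest: dvd_imp_le)
  then show ?thesis
    using SD_eq_field_aut SD_F5 finite_card_UNIV_eq_5_iff by auto
qed

end
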